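(* Let $N\ge1$, $K\ge1$, $n_v\ge0$, let $\mathbf{T}\in[0,1]^{K\times K}$ be row-stochastic, and let $\mathbf{P}\in[0,1]^{K^N\times K^N}$ be the global transition matrix given by $\mathbf{P}(x,y)=\prod_{n=1}^N \frac{1}{|V_n|}\sum_{i\in V_n}\mathbf{T}_{x_i,y_n}$ for $x,y\in[K]^N$. Then $\mathbf{P}$ is irreducible and aperiodic if and only if $\mathbf{T}$ is irreducible and aperiodic.
   Context: Vertices $[N]=\{1,\dots,N\}$ are arranged on a cycle; for $n\in[N]$, $V_n\subset[N]$ is the set of residues modulo $N$ of $n-n_v,\dots,n+n_v$ (so $n\in V_n$), and $|V_n|$ its cardinality. $\mathbf{P}$ is the transition matrix of the probabilistic cellular automaton with local transition matrix $\mathbf{T}$. *)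

theory Defs
  imports Complex_Main "HOL-Library.FuncSet"
begin

fun mpow :: "'a set \<Rightarrow> ('a \<Rightarrow> 'a \<Rightarrow> real) \<Rightarrow> nat \<Rightarrow> 'a \<Rightarrow> 'a \<Rightarrow> real" where
  "mpow S A 0 i j = (if i = j then 1 else 0)"
| "mpow S A (Suc m) i j = (\<Sum>k\<in>S. mpow S A m i k * A k j)"

definition irreducible_mat :: "'a set \<Rightarrow> ('a \<Rightarrow> 'a \<Rightarrow> real) \<Rightarrow> bool" where
  "irreducible_mat S A \<longleftrightarrow> (\<forall>i\<in>S. \<forall>j\<in>S. \<exists>m. mpow S A m i j > 0)"

definition period_mat :: "'a set \<Rightarrow> ('a \<Rightarrow> 'a \<Rightarrow> real) \<Rightarrow> 'a \<Rightarrow> nat" where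
  "period_mat S A i = Gcd {m. m > 0 \<and> mpow S A m i i > 0}"

definition aperiodic_mat :: "'a set \<Rightarrow> ('a \<Rightarrow> 'a \<Rightarrow> real) \<Rightarrow> bool" where
  "aperiodic_mat S A \<longleftrightarrow> (\<forall>i\<in>S. period_mat S A i = 1)"

text \<open>Local states [K] = {0..<K}; vertices [N] = {0..<N} on a cycle;
  global configurations [K]^N as extensional functions.\<close>

definition local_states :: "nat \<Rightarrow> nat set" where
  "local_states K = {0..<K}"

definition configs :: "nat \<Rightarrow> nat \<Rightarrow> (nat \<Rightarrow> nat) set" where
  "configs N K = PiE {0..<N} (\<lambda>_. {0..<K})"

definition nbhd :: "nat \<Rightarrow> nat \<Rightarrow> nat \<Rightarrow> nat set" where
  "nbhd N nv n = {nat ((int n + d) mod int N) | d. - int nv \<le> d \<and> d \<le> int nv}"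

definition row_stochastic :: "nat \<Rightarrow> (nat \<Rightarrow> nat \<Rightarrow> real) \<Rightarrow> bool" where
  "row_stochastic K T \<longleftrightarrow>
     (\<forall>i<K. \<forall>j<K. 0 \<le> T i j \<and> T i j \<le> 1) \<and> (\<forall>i<K. (\<Sum>j<K. T i j) = 1)"

definition global_P :: "nat \<Rightarrow> nat \<Rightarrow> (nat \<Rightarrow> nat \<Rightarrow> real) \<Rightarrow> (nat \<Rightarrow> nat) \<Rightarrow> (nat \<Rightarrow> nat) \<Rightarrow> real" where
  "global_P N nv T x y =
     (\<Prod>n<N. (1 / real (card (nbhd N nv n))) * (\<Sum>i\<in>nbhd N nv n. T (x i) (y n)))"

end

theory Submission
  imports Defs
begin

(* Positivity of the entries of P^m depends only on the positivity pattern of T. If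
   P^m(x,y) > 0, then every y_n is reachable in m steps of T from some x_i; conversely, if
   T^m(x_n,y_n) > 0 at every vertex n, then P^m(x,y) > 0, because n is in V_n and so each
   vertex may follow its own T-chain. For a nonnegative matrix on a finite set, "irreducible
   and aperiodic" means primitive: all entries of A^m are positive for all large m. The
   nontrivial direction holds because the return times of a state form an additive submonoid
   of the naturals with gcd 1, and such a submonoid contains all large numbers. Both sides of
   the equivalence therefore assert primitivity, and the two reachability facts (applied to
   constant configurations in one direction) carry primitivity between P and T. *)

lemma sum_pos_iff_ex_pos:
  fixes f :: "'a \<Rightarrow> 'b::ordered_comm_monoid_add"
  assumes "finite A" and "\<And>x. x \<in> A \<Longrightarrow> 0 \<le> f x"
  shows "0 < sum f A \<longleftrightarrow> (\<exists>x\<in>A. 0 < f x)"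
  using assms by (auto simp: order_less_le sum_nonneg sum_nonneg_eq_0_iff)

lemma prod_pos_iff_all_pos:
  fixes f :: "'a \<Rightarrow> 'b::linordered_idom"
  assumes "finite A" and "\<And>x. x \<in> A \<Longrightarrow> 0 \<le> f x"
  shows "0 < prod f A \<longleftrightarrow> (\<forall>x\<in>A. 0 < f x)"
  using assms by (auto simp: order_less_le prod_nonneg prod_zero_iff)

lemma mpow_nonneg:
  assumes "\<forall>k\<in>S. \<forall>l\<in>S. 0 \<le> A k l" and "j \<in> S"
  shows "0 \<le> mpow S A m i j"
  using assms(2)
proof (induction m arbitrary: j)
  case (Suc m)
  then show ?case using assms(1) by (auto intro!: sum_nonneg)
qed simp

lemma mpow_Suc_pos_iff:
  assumes "finite S" and "\<forall>k\<in>S. \<forall>l\<in>S. 0 \<le> A k l" and "j \<in> S"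
  shows "0 < mpow S A (Suc m) i j \<longleftrightarrow> (\<exists>k\<in>S. 0 < mpow S A m i k \<and> 0 < A k j)"
proof -
  have nonneg: "0 \<le> mpow S A m i k" "0 \<le> A k j" if "k \<in> S" for k
    using that assms(2,3) by (simp_all add: mpow_nonneg)
  have "0 < mpow S A (Suc m) i j \<longleftrightarrow> (\<exists>k\<in>S. 0 < mpow S A m i k * A k j)"
    using assms(1) nonneg by (simp add: sum_pos_iff_ex_pos)
  also have "\<dots> \<longleftrightarrow> (\<exists>k\<in>S. 0 < mpow S A m i k \<and> 0 < A k j)"
    using nonneg by (intro bex_cong) (auto simp: order_less_le)
  finally show ?thesis .
qed

lemma mpow_pos_add:
  assumes "finite S" and "\<forall>k\<in>S. \<forall>l\<in>S. 0 \<le> A k l" and "k \<in> S" and "j \<in> S"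
    and "0 < mpow S A m i k" and "0 < mpow S A n k j"
  shows "0 < mpow S A (m + n) i j"
  using assms(4,6)
proof (induction n arbitrary: j)
  case 0
  then have "k = j" by (simp split: if_splits)
  then show ?case using assms(5) by simp
next
  case (Suc n)
  then obtain l where l: "l \<in> S" "0 < mpow S A n k l" "0 < A l j"
    using mpow_Suc_pos_iff[OF assms(1,2)] by blast
  then have "0 < mpow S A (m + n) i l" using Suc.IH by blast
  then show ?case
    unfolding add_Suc_right using l Suc.prems(1) mpow_Suc_pos_iff[OF assms(1,2)] by blast
qed

lemma add_submonoid_mult_mem:
  fixes M :: "nat set"
  assumes "0 \<in> M" and "\<And>a b. a \<in> M \<Longrightarrow> b \<in> M \<Longrightarrow> a + b \<in> M" and "a \<in> M"
  shows "k * a \<in> M"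
  using assms by (induction k) auto

lemma add_submonoid_gap_Gcd:
  fixes M :: "nat set"
  assumes zero: "0 \<in> M" and add: "\<And>a b. a \<in> M \<Longrightarrow> b \<in> M \<Longrightarrow> a + b \<in> M"
  shows "\<exists>q\<in>M. q + Gcd M \<in> M"
proof (cases "M \<subseteq> {0}")
  case True
  then have "Gcd M = 0" by simp
  then have "0 + Gcd M \<in> M" using zero by (simp only: add_0_right)
  then show ?thesis using zero by blast
next
  case False
  define gaps where "gaps = {d. 0 < d \<and> (\<exists>q\<in>M. q + d \<in> M)}"
  define d where "d = (LEAST d. d \<in> gaps)"
  from False zero obtain s where "s \<in> gaps" unfolding gaps_def by force
  then have "d \<in> gaps" unfolding d_def by (rule LeastI)
  then obtain q where q: "0 < d" "q \<in> M" "q + d \<in> M" unfolding gaps_def by blast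
  have "d dvd a" if a: "a \<in> M" for a
  proof (rule ccontr)
    assume "\<not> d dvd a"
    then have r: "0 < a mod d" "a mod d < d" using q(1) by (simp_all add: mod_greater_zero_iff_not_dvd)
    have "a + (a div d) * q = (a div d) * (q + d) + a mod d"
      by (simp add: distrib_left)
    moreover have "a + (a div d) * q \<in> M" "(a div d) * (q + d) \<in> M"
      using add_submonoid_mult_mem[OF zero add] a q by (simp_all add: add)
    ultimately have "a mod d \<in> gaps" using r(1) unfolding gaps_def by auto
    then show False using r(2) not_less_Least unfolding d_def by blast
  qed
  then have "d dvd Gcd M" by (rule Gcd_greatest)
  moreover have "Gcd M dvd d" using q Gcd_dvd dvd_add_right_iff by blast
  ultimately show ?thesis using q dvd_antisym by auto
qed

lemma add_submonoid_eventually_mem: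
  fixes M :: "nat set"
  assumes zero: "0 \<in> M" and add: "\<And>a b. a \<in> M \<Longrightarrow> b \<in> M \<Longrightarrow> a + b \<in> M"
    and "Gcd M = 1"
  shows "\<forall>\<^sub>F n in sequentially. n \<in> M"
proof -
  obtain q where q: "q \<in> M" "q + 1 \<in> M"
    using add_submonoid_gap_Gcd[OF zero add] assms(3) by auto
  have "n \<in> M" if "q * q \<le> n" for n
  proof -
    have "n mod q \<le> n div q" if "0 < q"
      using that \<open>q * q \<le> n\<close> less_eq_div_iff_mult_less_eq[of q q n] mod_less_divisor[of q n]
      by linarith
    then have "n = (n div q - n mod q) * q + n mod q * (q + 1)"
      by (cases "q = 0") (simp_all add: diff_mult_distrib algebra_simps)
    then show ?thesis
      using add_submonoid_mult_mem[OF zero add] q add by metis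
  qed
  then show ?thesis by (auto simp: eventually_sequentially)
qed

definition primitive_mat :: "'a set \<Rightarrow> ('a \<Rightarrow> 'a \<Rightarrow> real) \<Rightarrow> bool" where
  "primitive_mat S A \<longleftrightarrow> (\<forall>\<^sub>F m in sequentially. \<forall>i\<in>S. \<forall>j\<in>S. 0 < mpow S A m i j)"

lemma period_mat_eq_Gcd_returns: "period_mat S A i = Gcd {m. 0 < mpow S A m i i}"
proof -
  have "{m. 0 < mpow S A m i i} = insert 0 {m. 0 < m \<and> 0 < mpow S A m i i}"
    by auto
  then show ?thesis by (simp add: period_mat_def)
qed

lemma aperiodic_eventually_return:
  assumes "finite S" and "\<forall>k\<in>S. \<forall>l\<in>S. 0 \<le> A k l" and "i \<in> S" and "period_mat S A i = 1"
  shows "\<forall>\<^sub>F m in sequentially. 0 < mpow S A m i i"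
proof -
  have "\<forall>\<^sub>F m in sequentially. m \<in> {m. 0 < mpow S A m i i}"
  proof (rule add_submonoid_eventually_mem)
    show "0 \<in> {m. 0 < mpow S A m i i}" by simp
    show "a + b \<in> {m. 0 < mpow S A m i i}"
      if "a \<in> {m. 0 < mpow S A m i i}" "b \<in> {m. 0 < mpow S A m i i}" for a b
      using that mpow_pos_add[OF assms(1,2,3,3)] by simp
    show "Gcd {m. 0 < mpow S A m i i} = 1"
      using assms(4) by (simp add: period_mat_eq_Gcd_returns)
  qed
  then show ?thesis by simp
qed

lemma irreducible_aperiodic_imp_primitive:
  assumes "finite S" and "\<forall>k\<in>S. \<forall>l\<in>S. 0 \<le> A k l"
    and "irreducible_mat S A" and "aperiodic_mat S A"
  shows "primitive_mat S A"
proof -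
  have "\<forall>\<^sub>F m in sequentially. 0 < mpow S A m i j" if ij: "i \<in> S" "j \<in> S" for i j
  proof -
    obtain d where d: "0 < mpow S A d i j"
      using assms(3) ij unfolding irreducible_mat_def by blast
    have "\<forall>\<^sub>F m in sequentially. 0 < mpow S A m i i"
      using aperiodic_eventually_return[OF assms(1,2) ij(1)] assms(4) ij(1)
      unfolding aperiodic_mat_def by blast
    then have "\<forall>\<^sub>F m in sequentially. 0 < mpow S A (m + d) i j"
      by (rule eventually_mono) (use mpow_pos_add[OF assms(1,2) ij(1,2) _ d] in blast)
    then show ?thesis by (rule eventually_sequentially_seg[THEN iffD1])
  qed
  then show ?thesis
    unfolding primitive_mat_def using assms(1) by (simp add: eventually_ball_finite_distrib)
qed

lemma primitive_imp_irreducible_aperiodic: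
  assumes "primitive_mat S A"
  shows "irreducible_mat S A \<and> aperiodic_mat S A"
proof -
  obtain M where M: "\<And>m i j. M \<le> m \<Longrightarrow> i \<in> S \<Longrightarrow> j \<in> S \<Longrightarrow> 0 < mpow S A m i j"
    using assms unfolding primitive_mat_def eventually_sequentially by blast
  have "irreducible_mat S A"
    unfolding irreducible_mat_def using M[OF order.refl] by blast
  moreover have "period_mat S A i = 1" if "i \<in> S" for i
  proof -
    have "period_mat S A i dvd M + 1" "period_mat S A i dvd M + 2"
      unfolding period_mat_eq_Gcd_returns using M[OF _ that that]
      by (auto intro!: Gcd_dvd simp del: mpow.simps)
    then have "period_mat S A i dvd (M + 2) - (M + 1)" by (intro dvd_diff_nat)
    then show ?thesis by simp
  qed
  ultimately show ?thesis unfolding aperiodic_mat_def by blast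
qed

lemma irreducible_aperiodic_iff_primitive:
  assumes "finite S" and "\<forall>k\<in>S. \<forall>l\<in>S. 0 \<le> A k l"
  shows "irreducible_mat S A \<and> aperiodic_mat S A \<longleftrightarrow> primitive_mat S A"
  using irreducible_aperiodic_imp_primitive[OF assms] primitive_imp_irreducible_aperiodic by blast

lemma nbhd_subset:
  assumes "0 < N"
  shows "nbhd N nv n \<subseteq> {..<N}"
proof
  fix i assume "i \<in> nbhd N nv n"
  then obtain d where "i = nat ((int n + d) mod int N)" unfolding nbhd_def by blast
  then show "i \<in> {..<N}" using assms by (simp add: nat_less_iff)
qed

lemma finite_nbhd: "0 < N \<Longrightarrow> finite (nbhd N nv n)"
  by (rule finite_subset[OF nbhd_subset]) auto

lemma self_mem_nbhd:
  assumes "n < N"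
  shows "n \<in> nbhd N nv n"
proof -
  have "n = nat ((int n + 0) mod int N)" using assms by simp
  then show ?thesis unfolding nbhd_def by fastforce
qed

lemma finite_local_states: "finite (local_states K)"
  by (simp add: local_states_def)

lemma finite_configs: "finite (configs N K)"
  by (simp add: configs_def finite_PiE)

lemma configs_mem_local_states: "x \<in> configs N K \<Longrightarrow> i < N \<Longrightarrow> x i \<in> local_states K"
  by (auto simp: configs_def local_states_def)

lemma row_stochastic_nonneg:
  "row_stochastic K T \<Longrightarrow> \<forall>a\<in>local_states K. \<forall>b\<in>local_states K. 0 \<le> T a b"
  by (simp add: row_stochastic_def local_states_def)

context
  fixes N K nv :: nat and T :: "nat \<Rightarrow> nat \<Rightarrow> real"
  assumes N: "0 < N" and T_nonneg: "\<forall>a\<in>local_states K. \<forall>b\<in>local_states K. 0 \<le> T a b"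
begin

lemma T_nbhd_nonneg:
  assumes "x \<in> configs N K" and "y \<in> configs N K" and "n < N" and "i \<in> nbhd N nv n"
  shows "0 \<le> T (x i) (y n)"
proof -
  have "i < N" using assms(4) nbhd_subset[OF N] by auto
  then show ?thesis using assms(1-3) T_nonneg configs_mem_local_states by simp
qed

lemma nbhd_sum_nonneg:
  assumes "x \<in> configs N K" and "y \<in> configs N K" and "n < N"
  shows "0 \<le> (\<Sum>i\<in>nbhd N nv n. T (x i) (y n))"
  using T_nbhd_nonneg[OF assms] by (intro sum_nonneg)

lemma global_P_nonneg: "\<forall>x\<in>configs N K. \<forall>y\<in>configs N K. 0 \<le> global_P N nv T x y"
  unfolding global_P_def using nbhd_sum_nonneg
  by (intro prod_nonneg ballI mult_nonneg_nonneg) auto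

lemma global_P_pos_iff:
  assumes "x \<in> configs N K" and "y \<in> configs N K"
  shows "0 < global_P N nv T x y \<longleftrightarrow> (\<forall>n<N. \<exists>i\<in>nbhd N nv n. 0 < T (x i) (y n))"
proof -
  have "0 < 1 / real (card (nbhd N nv n)) * (\<Sum>i\<in>nbhd N nv n. T (x i) (y n))
      \<longleftrightarrow> (\<exists>i\<in>nbhd N nv n. 0 < T (x i) (y n))" if n: "n < N" for n
  proof -
    have "0 < card (nbhd N nv n)"
      using finite_nbhd[OF N] self_mem_nbhd[OF n] card_gt_0_iff by blast
    then have "0 < 1 / real (card (nbhd N nv n)) * (\<Sum>i\<in>nbhd N nv n. T (x i) (y n))
        \<longleftrightarrow> 0 < (\<Sum>i\<in>nbhd N nv n. T (x i) (y n))"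
      by (simp add: zero_less_divide_iff)
    also have "\<dots> \<longleftrightarrow> (\<exists>i\<in>nbhd N nv n. 0 < T (x i) (y n))"
      using T_nbhd_nonneg[OF assms n] by (intro sum_pos_iff_ex_pos finite_nbhd[OF N])
    finally show ?thesis .
  qed
  then show ?thesis
    unfolding global_P_def using nbhd_sum_nonneg[OF assms]
    by (subst prod_pos_iff_all_pos) auto
qed

lemma mpow_global_P_pos_imp_mpow_T_pos:
  assumes "x \<in> configs N K" and "y \<in> configs N K"
    and "0 < mpow (configs N K) (global_P N nv T) m x y" and "n < N"
  shows "\<exists>i<N. 0 < mpow (local_states K) T m (x i) (y n)"
  using assms(2-4)
proof (induction m arbitrary: y n)
  case 0
  then show ?case by (auto split: if_splits)
next
  case (Suc m)
  obtain w where w: "w \<in> configs N K" "0 < mpow (configs N K) (global_P N nv T) m x w"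
    "0 < global_P N nv T w y"
    using Suc.prems(1,2) mpow_Suc_pos_iff[OF finite_configs global_P_nonneg] by blast
  obtain i where i: "i \<in> nbhd N nv n" "0 < T (w i) (y n)"
    using global_P_pos_iff[OF w(1) Suc.prems(1)] w(3) Suc.prems(3) by blast
  have "i < N" using i(1) nbhd_subset[OF N] by auto
  then obtain i' where "i' < N" "0 < mpow (local_states K) T m (x i') (w i)"
    using Suc.IH[OF w(1,2)] by blast
  then show ?case
    using i(2) w(1) \<open>i < N\<close> Suc.prems(1,3) configs_mem_local_states
      mpow_Suc_pos_iff[OF finite_local_states T_nonneg] by blast
qed

lemma mpow_T_pos_imp_mpow_global_P_pos:
  assumes "x \<in> configs N K" and "y \<in> configs N K"
    and "\<forall>n<N. 0 < mpow (local_states K) T m (x n) (y n)"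
  shows "0 < mpow (configs N K) (global_P N nv T) m x y"
  using assms(2,3)
proof (induction m arbitrary: y)
  case 0
  then have "x = y"
    using assms(1) unfolding configs_def by (intro PiE_ext) (auto split: if_splits)
  then show ?case by simp
next
  case (Suc m)
  have "\<exists>k\<in>local_states K. 0 < mpow (local_states K) T m (x n) k \<and> 0 < T k (y n)"
    if "n < N" for n
    using that Suc.prems configs_mem_local_states
      mpow_Suc_pos_iff[OF finite_local_states T_nonneg] by blast
  then obtain f where f: "\<And>n. n < N \<Longrightarrow>
      f n \<in> local_states K \<and> 0 < mpow (local_states K) T m (x n) (f n) \<and> 0 < T (f n) (y n)"
    by metis
  define z where "z = restrict f {0..<N}"
  have z: "z \<in> configs N K"
    using f unfolding z_def configs_def local_states_def by auto
  have "0 < mpow (configs N K) (global_P N nv T) m x z"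
    using f by (intro Suc.IH[OF z]) (simp add: z_def)
  moreover have "0 < global_P N nv T z y"
    unfolding global_P_pos_iff[OF z Suc.prems(1)]
    using f self_mem_nbhd unfolding z_def by fastforce
  ultimately show ?case
    using z Suc.prems(1) mpow_Suc_pos_iff[OF finite_configs global_P_nonneg] by blast
qed

lemma primitive_global_P_iff:
  "primitive_mat (configs N K) (global_P N nv T) \<longleftrightarrow> primitive_mat (local_states K) T"
proof
  assume "primitive_mat (configs N K) (global_P N nv T)"
  then show "primitive_mat (local_states K) T"
    unfolding primitive_mat_def
  proof (rule eventually_mono, intro ballI)
    fix m a b
    assume P_pos: "\<forall>x\<in>configs N K. \<forall>y\<in>configs N K. 0 < mpow (configs N K) (global_P N nv T) m x y"
      and ab: "a \<in> local_states K" "b \<in> local_states K"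
    define const where "const c = restrict (\<lambda>_. c) {0..<N}" for c :: nat
    have "const a \<in> configs N K" "const b \<in> configs N K"
      using ab unfolding const_def configs_def local_states_def by auto
    then obtain i where "i < N" "0 < mpow (local_states K) T m (const a i) (const b 0)"
      using mpow_global_P_pos_imp_mpow_T_pos P_pos N by blast
    then show "0 < mpow (local_states K) T m a b"
      using N unfolding const_def by simp
  qed
next
  assume "primitive_mat (local_states K) T"
  then show "primitive_mat (configs N K) (global_P N nv T)"
    unfolding primitive_mat_def
    by (rule eventually_mono) (blast intro: mpow_T_pos_imp_mpow_global_P_pos configs_mem_local_states)
qed

end

theorem proposition2p9:
  fixes N K nv :: nat and T :: "nat \<Rightarrow> nat \<Rightarrow> real"
  assumes "N \<ge> 1" and "K \<ge> 1" and "row_stochastic K T"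
  shows "(irreducible_mat (configs N K) (global_P N nv T) \<and> aperiodic_mat (configs N K) (global_P N nv T))
     \<longleftrightarrow> (irreducible_mat (local_states K) T \<and> aperiodic_mat (local_states K) T)"
proof -
  have N: "0 < N" using assms(1) by simp
  have T_nonneg: "\<forall>a\<in>local_states K. \<forall>b\<in>local_states K. 0 \<le> T a b"
    using assms(3) by (rule row_stochastic_nonneg)
  show ?thesis
    using primitive_global_P_iff[OF N T_nonneg]
    by (simp add: irreducible_aperiodic_iff_primitive[OF finite_configs global_P_nonneg[OF N T_nonneg]]
        irreducible_aperiodic_iff_primitive[OF finite_local_states T_nonneg])
qed

end
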